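(* For every $d\geq 2$, $m(\ell_\infty^d)=2d-1$, where $\ell_\infty^d$ is $\mathbb{R}^d$ with the norm $\|x\|_\infty=\max_i |x^{(i)}|$.
   Context: For a set $S$ in a normed space, its midpoint set is $M(S)=\{\tfrac12(x+y): x,y\in S,\ x\neq y\}$. A set $S$ is an M-set if every vector in $M(S)$ has norm exactly $1$ and every vector in $S$ has norm strictly greater than $1$. $m(X)$ denotes the largest cardinality of an M-set in the normed space $X$ if such a largest finite cardinality exists, and $m(X)=\infty$ otherwise. *)

theory Defs
  imports "HOL-Analysis.Analysis" "HOL-Library.Extended_Nat"
begin

definition midpoint_set :: "'a::real_vector set \<Rightarrow> 'a set" where
  "midpoint_set S = {(1/2) *\<^sub>R (x + y) | x y. x \<in> S \<and> y \<in> S \<and> x \<noteq> y}"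

definition is_M_set :: "('a::real_vector \<Rightarrow> real) \<Rightarrow> 'a set \<Rightarrow> bool" where
  "is_M_set N S \<longleftrightarrow> (\<forall>v \<in> midpoint_set S. N v = 1) \<and> (\<forall>x \<in> S. N x > 1)"

definition m_number :: "('a::real_vector \<Rightarrow> real) \<Rightarrow> enat" where
  "m_number N = (if \<exists>n::nat. (\<exists>S. is_M_set N S \<and> finite S \<and> card S = n)
                                 \<and> (\<forall>S. is_M_set N S \<longrightarrow> finite S \<and> card S \<le> n)
                 then enat (THE n::nat. (\<exists>S. is_M_set N S \<and> finite S \<and> card S = n)
                                 \<and> (\<forall>S. is_M_set N S \<longrightarrow> finite S \<and> card S \<le> n))
                 else \<infinity>)"

text \<open>The maximum norm on R^d, with R^d represented as real^'n, d = CARD('n).\<close>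
definition sup_norm :: "real^'n \<Rightarrow> real" where
  "sup_norm x = Max (range (\<lambda>i. \<bar>x $ i\<bar>))"

end

theory Submission
  imports Defs
begin

(* For the maximum norm, being an M-set is a purely coordinatewise condition
   (lemma M_set_sup_norm_iff): every point has a coordinate of absolute value > 1,
   and any two distinct points x, y satisfy |x_i + y_i| <= 2 for all i with
   equality for some i.

   Upper bound: call (i, b) a direction, where b selects the sign; x exceeds (i, b)
   if +x_i > 1 resp. -x_i > 1.  Two distinct points of an M-set never exceed the
   same direction, so choosing a direction for every point is injective and
   |S| <= 2d.  If |S| = 2d, every direction is exceeded by exactly one point.  An
   averaging argument shows that the tight direction of two points p, q (where
   +-(p_k + q_k) = 2) can be exceeded by no third point; applied to the two
   points exceeding (j, +) and (j, -) this forces a third point to exceed an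
   already occupied direction, a contradiction since d >= 2 gives a third point.

   Lower bound: for a fixed coordinate i0, the point -2 e_i0 together with the
   2(d-1) points e_i0 +- 2 e_j (j /= i0) form an M-set. *)

lemma sup_norm_ge_component: "\<bar>x $ i\<bar> \<le> sup_norm x"
  unfolding sup_norm_def by (rule Max_ge) auto

lemma sup_norm_attained: "\<exists>i. sup_norm x = \<bar>x $ i\<bar>"
proof -
  have "sup_norm x \<in> range (\<lambda>i. \<bar>x $ i\<bar>)"
    unfolding sup_norm_def by (rule Max_in) auto
  then show ?thesis by auto
qed

lemma sup_norm_eq_1_iff:
  "sup_norm x = 1 \<longleftrightarrow> (\<forall>i. \<bar>x $ i\<bar> \<le> 1) \<and> (\<exists>i. \<bar>x $ i\<bar> = 1)"
  using sup_norm_attained[of x] sup_norm_ge_component[of x] by (metis order_antisym)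

lemma sup_norm_gt_1_iff: "1 < sup_norm x \<longleftrightarrow> (\<exists>i. 1 < \<bar>x $ i\<bar>)"
  using sup_norm_attained[of x] sup_norm_ge_component[of x] by (metis less_le_trans)

lemma sup_norm_midpoint_eq_1_iff:
  "sup_norm ((1/2) *\<^sub>R (x + y)) = 1 \<longleftrightarrow>
     (\<forall>i. \<bar>x $ i + y $ i\<bar> \<le> 2) \<and> (\<exists>i. \<bar>x $ i + y $ i\<bar> = 2)"
  unfolding sup_norm_eq_1_iff by simp

lemma M_set_sup_norm_iff:
  fixes S :: "(real^'n) set"
  shows "is_M_set sup_norm S \<longleftrightarrow>
    (\<forall>x\<in>S. \<exists>i. 1 < \<bar>x $ i\<bar>) \<and>
    (\<forall>x\<in>S. \<forall>y\<in>S. x \<noteq> y \<longrightarrow>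
       (\<forall>i. \<bar>x $ i + y $ i\<bar> \<le> 2) \<and> (\<exists>i. \<bar>x $ i + y $ i\<bar> = 2))"
proof -
  have "(\<forall>v \<in> midpoint_set S. sup_norm v = 1) \<longleftrightarrow>
        (\<forall>x\<in>S. \<forall>y\<in>S. x \<noteq> y \<longrightarrow> sup_norm ((1/2) *\<^sub>R (x + y)) = 1)"
    unfolding midpoint_set_def by blast
  then show ?thesis
    unfolding is_M_set_def sup_norm_gt_1_iff sup_norm_midpoint_eq_1_iff by blast
qed

section \<open>Directions\<close>

definition sign_of :: "bool \<Rightarrow> real" where
  "sign_of b = (if b then 1 else -1)"

definition exceeds :: "real^'n \<Rightarrow> 'n \<times> bool \<Rightarrow> bool" where
  "exceeds x d \<longleftrightarrow> 1 < sign_of (snd d) * x $ fst d"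

lemma sign_of_mult_le_abs: "sign_of b * t \<le> \<bar>t\<bar>"
  by (simp add: sign_of_def) arith

lemma abs_eq_2_sign_of: "\<bar>t\<bar> = 2 \<Longrightarrow> \<exists>b. sign_of b * t = 2"
  by (rule exI[of _ "0 \<le> t"]) (auto simp: sign_of_def split: abs_split)

context
  fixes S :: "(real^'n) set"
  assumes M: "is_M_set sup_norm S"
begin

lemma M_set_exceeds_some:
  assumes "x \<in> S"
  shows "\<exists>d. exceeds x d"
proof -
  obtain i where "1 < \<bar>x $ i\<bar>" using M assms unfolding M_set_sup_norm_iff by blast
  then have "exceeds x (i, 0 \<le> x $ i)" by (simp add: exceeds_def sign_of_def) arith
  then show ?thesis ..
qed

lemma M_set_pair_bound: "\<lbrakk>x \<in> S; y \<in> S; x \<noteq> y\<rbrakk> \<Longrightarrow> \<bar>x $ i + y $ i\<bar> \<le> 2"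
  using M unfolding M_set_sup_norm_iff by blast

lemma M_set_pair_tight:
  "\<lbrakk>x \<in> S; y \<in> S; x \<noteq> y\<rbrakk> \<Longrightarrow> \<exists>k b. sign_of b * (x $ k + y $ k) = 2"
  using M abs_eq_2_sign_of unfolding M_set_sup_norm_iff by blast

lemma M_set_exceeds_unique:
  assumes "x \<in> S" "y \<in> S" "exceeds x d" "exceeds y d"
  shows "x = y"
proof (rule ccontr)
  assume "x \<noteq> y"
  then have "\<bar>x $ fst d + y $ fst d\<bar> \<le> 2" using M_set_pair_bound assms by blast
  then have "sign_of (snd d) * (x $ fst d + y $ fst d) \<le> 2"
    using sign_of_mult_le_abs[of "snd d" "x $ fst d + y $ fst d"] by linarith
  then show False using assms(3,4) unfolding exceeds_def by (simp add: distrib_left)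
qed

text \<open>Averaging: the tight direction of two points is exceeded by no third point,
  since its coordinate is at most 2 minus either of theirs.\<close>
lemma M_set_tight_blocks:
  assumes "p \<in> S" "q \<in> S" "r \<in> S" "r \<noteq> p" "r \<noteq> q"
    and tight: "sign_of b * (p $ k + q $ k) = 2"
  shows "\<not> exceeds r (k, b)"
proof -
  have "\<bar>r $ k + p $ k\<bar> \<le> 2" "\<bar>r $ k + q $ k\<bar> \<le> 2"
    using M_set_pair_bound assms by blast+
  then have "sign_of b * (r $ k + p $ k) \<le> 2" "sign_of b * (r $ k + q $ k) \<le> 2"
    using sign_of_mult_le_abs[of b "r $ k + p $ k"] sign_of_mult_le_abs[of b "r $ k + q $ k"]
    by linarith+
  then show ?thesis using tight unfolding exceeds_def by (simp add: distrib_left)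
qed

text \<open>If u and v are tight in direction (j, b) while v exceeds the opposite direction, then
  the j-th coordinate of u is so large (beyond 3 in that sign) that every other point
  of S is pushed past the opposite direction as well.\<close>
lemma M_set_opposite_tight:
  assumes "u \<in> S" "t \<in> S" "t \<noteq> u"
    and v: "exceeds v (j, \<not> b)"
    and tight: "sign_of b * (u $ j + v $ j) = 2"
  shows "exceeds t (j, \<not> b)"
proof -
  have "\<bar>u $ j + t $ j\<bar> \<le> 2" using M_set_pair_bound assms by blast
  then have "sign_of b * (u $ j + t $ j) \<le> 2"
    using sign_of_mult_le_abs[of b "u $ j + t $ j"] by linarith
  then show ?thesis using v tight unfolding exceeds_def sign_of_def by (auto split: if_splits)
qed

end

section \<open>Upper bound\<close>

theorem M_set_sup_norm_card_le:
  fixes S :: "(real^'n) set"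
  assumes M: "is_M_set sup_norm S" and d: "CARD('n) \<ge> 2"
  shows "finite S \<and> card S \<le> 2 * CARD('n) - 1"
proof -
  obtain f where f: "\<And>x. x \<in> S \<Longrightarrow> exceeds x (f x)"
    using M_set_exceeds_some[OF M] by metis
  have inj: "inj_on f S"
    using f M_set_exceeds_unique[OF M] by (intro inj_onI) metis
  have card_dirs: "card (UNIV :: ('n \<times> bool) set) = 2 * CARD('n)"
    by simp
  have fin: "finite S"
    using finite_imageD[OF finite_subset[OF subset_UNIV] inj] by simp
  have card_S: "card S = card (f ` S)" using card_image[OF inj] by simp
  have "card S \<le> 2 * CARD('n)"
    using card_S card_mono[of UNIV "f ` S"] card_dirs by simp
  moreover have "card S \<noteq> 2 * CARD('n)"
  proof
    assume full: "card S = 2 * CARD('n)"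
    then have "f ` S = UNIV"
      using card_subset_eq[of UNIV "f ` S"] card_S card_dirs by simp
    then have occupied: "\<And>d. \<exists>x\<in>S. f x = d" by (metis UNIV_I imageE)
    obtain j :: 'n where True by simp
    obtain p q where p: "p \<in> S" "f p = (j, True)" and q: "q \<in> S" "f q = (j, False)"
      using occupied by metis
    have p_exc: "exceeds p (j, True)" and q_exc: "exceeds q (j, False)"
      using f p q by metis+
    from p q have "p \<noteq> q" by auto
    then obtain k b where tight: "sign_of b * (p $ k + q $ k) = 2"
      using M_set_pair_tight[OF M p(1) q(1)] by blast
    obtain r where r: "r \<in> S" "f r = (k, b)" using occupied by blast
    have "r = p \<or> r = q"
      using M_set_tight_blocks[OF M p(1) q(1) r(1) _ _ tight] f[OF r(1)] r(2) by auto
    then have "k = j" using p q r by auto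
    text \<open>Let v be the one of p, q exceeding the direction opposite to the tight one.\<close>
    define u v where "u = (if b then p else q)" and "v = (if b then q else p)"
    have uv: "u \<in> S" "v \<in> S" "exceeds v (j, \<not> b)" "sign_of b * (u $ j + v $ j) = 2"
      using p q p_exc q_exc tight \<open>k = j\<close> by (auto simp: u_def v_def add.commute)
    have "\<not> S \<subseteq> {u, v}"
    proof
      assume "S \<subseteq> {u, v}"
      then have "card S \<le> card {u, v}" by (intro card_mono) auto
      also have "\<dots> \<le> 2" by (simp add: card_insert_if)
      finally show False using full d by simp
    qed
    then obtain t where t: "t \<in> S" "t \<noteq> u" "t \<noteq> v" by blast
    have "exceeds t (j, \<not> b)" using M_set_opposite_tight[OF M uv(1) t(1,2) uv(3,4)] .
    then show False using M_set_exceeds_unique[OF M t(1) uv(2) _ uv(3)] t(3) by blast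
  qed
  ultimately show ?thesis using fin by simp
qed

section \<open>Lower bound\<close>

text \<open>The extremal configuration: with a fixed coordinate i0, the point -2 e_i0 and the
  points e_i0 +- 2 e_j for j /= i0; the latter are indexed by the directions off the axis i0.\<close>
definition extremal_point :: "'n \<Rightarrow> 'n \<times> bool \<Rightarrow> real^'n" where
  "extremal_point i0 d = (\<chi> i. if i = i0 then 1 else if i = fst d then 2 * sign_of (snd d) else 0)"

definition off_axis_directions :: "'n \<Rightarrow> ('n \<times> bool) set" where
  "off_axis_directions i0 = (UNIV - {i0}) \<times> UNIV"

definition extremal_set :: "'n \<Rightarrow> (real^'n) set" where
  "extremal_set i0 = insert (\<chi> i. if i = i0 then -2 else 0)
                        (extremal_point i0 ` off_axis_directions i0)"

lemma extremal_point_component: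
  "extremal_point i0 d $ i = (if i = i0 then 1 else if i = fst d then 2 * sign_of (snd d) else 0)"
  by (simp add: extremal_point_def)

lemma extremal_set_card:
  "finite (extremal_set i0) \<and> card (extremal_set (i0::'n::finite)) = 2 * CARD('n) - 1"
proof -
  have "inj_on (extremal_point i0) (off_axis_directions i0)"
  proof (rule inj_onI)
    fix d d' assume dd': "d \<in> off_axis_directions i0" "d' \<in> off_axis_directions i0"
      "extremal_point i0 d = extremal_point i0 d'"
    then have "extremal_point i0 d $ fst d = extremal_point i0 d' $ fst d"
      "extremal_point i0 d $ fst d' = extremal_point i0 d' $ fst d'" by simp_all
    with dd'(1,2) show "d = d'"
      by (cases d, cases d')
         (auto simp: off_axis_directions_def extremal_point_component sign_of_def split: if_splits)
  qed
  moreover have "(\<chi> i. if i = i0 then -2 else 0) \<notin> extremal_point i0 ` off_axis_directions i0"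
  proof
    assume "(\<chi> i. if i = i0 then -2 else 0) \<in> extremal_point i0 ` off_axis_directions i0"
    then obtain d where "(\<chi> i. if i = i0 then -2 else 0) = extremal_point i0 d" by blast
    then have "(\<chi> i. if i = i0 then -2 else 0) $ i0 = extremal_point i0 d $ i0" by simp
    then show False by (simp add: extremal_point_component)
  qed
  moreover have "card (off_axis_directions i0) = 2 * CARD('n) - 2"
    by (simp add: off_axis_directions_def card_cartesian_product card_Diff_singleton)
  ultimately have "card (extremal_set i0) = Suc (2 * CARD('n) - 2)"
    by (simp add: extremal_set_def card_image)
  moreover have "Suc (2 * CARD('n) - 2) = 2 * CARD('n) - 1"
    using zero_less_card_finite[where 'a='n] by linarith
  ultimately show ?thesis by (simp add: extremal_set_def)
qed

lemma extremal_set_M_set: "is_M_set sup_norm (extremal_set i0)"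
  unfolding M_set_sup_norm_iff
proof (rule conjI; intro ballI impI)
  fix x assume "x \<in> extremal_set i0"
  then show "\<exists>i. 1 < \<bar>x $ i\<bar>"
    unfolding extremal_set_def off_axis_directions_def
    by (auto simp: extremal_point_component sign_of_def intro: exI[of _ i0])
next
  fix x y assume xy: "x \<in> extremal_set i0" "y \<in> extremal_set i0" "x \<noteq> y"
  show "(\<forall>i. \<bar>x $ i + y $ i\<bar> \<le> 2) \<and> (\<exists>i. \<bar>x $ i + y $ i\<bar> = 2)"
  proof (cases "x \<in> extremal_point i0 ` off_axis_directions i0 \<and>
                y \<in> extremal_point i0 ` off_axis_directions i0")
    case True
    text \<open>Two points e_i0 +- 2 e_j: coordinate i0 sums to 2, and their +-2 entries never
      add up with equal sign since the points differ.\<close>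
    then obtain d d' where d: "d \<in> off_axis_directions i0" "d' \<in> off_axis_directions i0"
      and x: "x = extremal_point i0 d" and y: "y = extremal_point i0 d'" by blast
    with xy have "d \<noteq> d'" by blast
    with d show ?thesis
      unfolding x y
      by (cases d, cases d')
         (auto simp: off_axis_directions_def extremal_point_component sign_of_def
               intro!: exI[of _ i0])
  next
    case False
    text \<open>The point -2 e_i0 and e_i0 +- 2 e_j: coordinate j sums to +-2.\<close>
    with xy obtain j b where "j \<noteq> i0"
      "{x, y} = {\<chi> i. if i = i0 then -2 else 0, extremal_point i0 (j, b)}"
      unfolding extremal_set_def off_axis_directions_def by auto
    then show ?thesis
      by (auto simp: doubleton_eq_iff extremal_point_component sign_of_def add.commute
               intro!: exI[of _ j])
  qed
qed

lemma m_number_eqI: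
  assumes "is_M_set N S" "finite S" "card S = n"
    and bound: "\<And>T. is_M_set N T \<Longrightarrow> finite T \<and> card T \<le> n"
  shows "m_number N = enat n"
proof -
  let ?P = "\<lambda>n. (\<exists>S. is_M_set N S \<and> finite S \<and> card S = n)
                  \<and> (\<forall>S. is_M_set N S \<longrightarrow> finite S \<and> card S \<le> n)"
  have P: "?P n" using assms by blast
  have unique: "n' = n" if "?P n'" for n'
    using that P by (meson antisym)
  have "(THE n. ?P n) = n"
    using P unique by (rule the_equality)
  moreover have "\<exists>n. ?P n" using P by blast
  ultimately show ?thesis unfolding m_number_def by (simp only: if_True)
qed

theorem theorem7:
  assumes "CARD('n::finite) \<ge> 2"
  shows "m_number (sup_norm :: real^'n \<Rightarrow> real) = enat (2 * CARD('n) - 1)"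
proof -
  obtain i0 :: 'n where True by simp
  show ?thesis
    using m_number_eqI[OF extremal_set_M_set[of i0]] extremal_set_card[of i0]
      M_set_sup_norm_card_le[OF _ assms] by blast
qed

end
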